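(* Let $n,a,b$ be positive integers and $g=a+b$. Among all double brooms $B(n,a',b')$ with $a'+b'=g$, the Wiener index is maximum when $a'=b'=g/2$ if $g$ is even, and when $a'=(g-1)/2$, $b'=(g+1)/2$ if $g$ is odd.
   Context: All graphs are finite and simple; $W(G)=\sum_{\{u,v\}\subseteq V(G)} d(u,v)$ is the Wiener index. A leaf is a vertex of degree $1$; a broom vertex is a vertex adjacent to a leaf. A double broom $B(n,a,b)$ is a tree on $n$ vertices with exactly two broom vertices $x$ and $y$ such that $\deg(x)=a+1$ and $\deg(y)=b+1$ (i.e. a path from $x$ to $y$ with $a$ pendant leaves at $x$ and $b$ pendant leaves at $y$). *)

theory Defs
  imports Main
begin

fun is_walk :: "('a \<Rightarrow> 'a \<Rightarrow> bool) \<Rightarrow> 'a list \<Rightarrow> bool" where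
  "is_walk E [] = False"
| "is_walk E [x] = True"
| "is_walk E (x # y # xs) = (E x y \<and> is_walk E (y # xs))"

definition gdist :: "'a set \<Rightarrow> ('a \<Rightarrow> 'a \<Rightarrow> bool) \<Rightarrow> 'a \<Rightarrow> 'a \<Rightarrow> nat" where
  "gdist V E u v = (LEAST k. \<exists>xs. is_walk E xs \<and> set xs \<subseteq> V \<and> hd xs = u \<and> last xs = v
                                  \<and> length xs = Suc k)"

definition wiener :: "('a::linorder) set \<Rightarrow> ('a \<Rightarrow> 'a \<Rightarrow> bool) \<Rightarrow> nat" where
  "wiener V E = (\<Sum>(u, v) \<in> {(u, v). u \<in> V \<and> v \<in> V \<and> u < v}. gdist V E u v)"

text \<open>The double broom B(n,a,b) on vertex set {0..<n}: a path 0 - 1 - ... - (L-1)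
  with L = n - a - b (so x = 0, y = L-1), the a leaves L..L+a-1 attached to x = 0 and the
  b leaves L+a..n-1 attached to y = L-1.\<close>
definition db_arc :: "nat \<Rightarrow> nat \<Rightarrow> nat \<Rightarrow> nat \<Rightarrow> nat \<Rightarrow> bool" where
  "db_arc n a b u v = (let L = n - a - b in
      (v = Suc u \<and> v < L)
    \<or> (u = 0 \<and> L \<le> v \<and> v < L + a)
    \<or> (u = L - 1 \<and> L + a \<le> v \<and> v < n))"

definition db_edge :: "nat \<Rightarrow> nat \<Rightarrow> nat \<Rightarrow> nat \<Rightarrow> nat \<Rightarrow> bool" where
  "db_edge n a b u v = (db_arc n a b u v \<or> db_arc n a b v u)"

definition double_broom_wiener :: "nat \<Rightarrow> nat \<Rightarrow> nat \<Rightarrow> nat" where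
  "double_broom_wiener n a b = wiener {0..<n} (db_edge n a b)"

end

theory Submission
  imports Defs
begin

(* In B(n,a,b) let L = n - a - b be the number of path vertices.  Every vertex v has a position
   p v on the path (itself, or the broom vertex its leaf hangs on) and a depth e v (0 on the
   path, 1 for a leaf), and distinct vertices u, v are at distance |p u - p v| + e u + e v.
   Summing over ordered pairs gives
     2 W = sum_{i,j<L} |i - j| + 2 (a + b) sum_{i<L} i + 2 a b (L - 1) + 2 (n - 1) (a + b),
   so for fixed n and a + b only the term 2 a b (L - 1) depends on the split, and a b is
   largest when a and b differ by at most one. *)

lemma walk_dist_le:
  assumes lip: "\<And>u x y. u \<in> V \<Longrightarrow> x \<in> V \<Longrightarrow> y \<in> V \<Longrightarrow> E x y \<Longrightarrow> d u y \<le> d u x + (1::nat)"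
    and "is_walk E xs" "set xs \<subseteq> V" "u \<in> V"
  shows "d u (last xs) \<le> d u (hd xs) + (length xs - 1)"
  using assms(2-)
proof (induction xs)
  case (Cons x xs)
  then show ?case using lip[of u x "hd xs"] by (cases xs) auto
qed simp

lemma walk_of_dist:
  assumes step: "\<And>u v. u \<in> V \<Longrightarrow> v \<in> V \<Longrightarrow> u \<noteq> v \<Longrightarrow> \<exists>w\<in>V. E u w \<and> d w v + 1 = (d u v::nat)"
    and refl: "\<And>u. d u u = 0"
    and "u \<in> V" "v \<in> V"
  shows "\<exists>xs. is_walk E xs \<and> set xs \<subseteq> V \<and> hd xs = u \<and> last xs = v \<and> length xs = Suc (d u v)"
  using assms(3,4)
proof (induction "d u v" arbitrary: u)
  case 0
  then have "u = v" using step[of u v] by force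
  then show ?case using 0 by (intro exI[of _ "[u]"]) auto
next
  case (Suc k)
  then have "u \<noteq> v" using refl by (metis nat.distinct(1))
  then obtain w where w: "w \<in> V" "E u w" "d w v + 1 = d u v" using step Suc.prems by blast
  obtain ws where "is_walk E ws" "set ws \<subseteq> V" "hd ws = w" "last ws = v" "length ws = Suc (d w v)"
    using Suc.hyps(1)[of w] Suc.hyps(2) Suc.prems(2) w by auto
  with w Suc.prems show ?case
    by (intro exI[of _ "u # ws"]) (cases ws; auto)
qed

lemma gdist_eqI:
  assumes lip: "\<And>u x y. u \<in> V \<Longrightarrow> x \<in> V \<Longrightarrow> y \<in> V \<Longrightarrow> E x y \<Longrightarrow> d u y \<le> d u x + (1::nat)"
    and step: "\<And>u v. u \<in> V \<Longrightarrow> v \<in> V \<Longrightarrow> u \<noteq> v \<Longrightarrow> \<exists>w\<in>V. E u w \<and> d w v + 1 = d u v"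
    and refl: "\<And>u. d u u = 0"
    and "u \<in> V" "v \<in> V"
  shows "gdist V E u v = d u v"
  unfolding gdist_def
proof (rule Least_equality)
  show "\<exists>xs. is_walk E xs \<and> set xs \<subseteq> V \<and> hd xs = u \<and> last xs = v \<and> length xs = Suc (d u v)"
    using walk_of_dist[OF step refl] assms(4,5) by blast
next
  fix k assume "\<exists>xs. is_walk E xs \<and> set xs \<subseteq> V \<and> hd xs = u \<and> last xs = v \<and> length xs = Suc k"
  then obtain xs where "is_walk E xs" "set xs \<subseteq> V" "hd xs = u" "last xs = v" "length xs = Suc k"
    by blast
  then show "d u v \<le> k" using walk_dist_le[of V E d xs u, OF lip] assms(4) refl by auto
qed

lemma sum_pairs_less_double:
  fixes f :: "'a::linorder \<Rightarrow> 'a \<Rightarrow> 'b::comm_semiring_1"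
  assumes "finite V" and sym: "\<And>x y. f x y = f y x" and diag: "\<And>x. f x x = 0"
  shows "2 * (\<Sum>(u, v) \<in> {(u, v). u \<in> V \<and> v \<in> V \<and> u < v}. f u v) = (\<Sum>u\<in>V. \<Sum>v\<in>V. f u v)"
proof -
  define A where "A = {(u, v). u \<in> V \<and> v \<in> V \<and> u < v}"
  have fin: "finite A" "finite (prod.swap ` A)" "finite (Id_on V)"
    using assms(1) unfolding A_def by (auto intro: finite_subset[of _ "V \<times> V"])
  have split: "V \<times> V = A \<union> prod.swap ` A \<union> Id_on V"
    unfolding A_def by (auto simp: image_iff Id_on_iff)
  have "(\<Sum>u\<in>V. \<Sum>v\<in>V. f u v) = (\<Sum>(u, v) \<in> A \<union> prod.swap ` A \<union> Id_on V. f u v)"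
    by (simp add: sum.cartesian_product split)
  also have "\<dots> = (\<Sum>(u, v) \<in> A. f u v) + (\<Sum>(u, v) \<in> prod.swap ` A. f u v)"
  proof -
    have "A \<inter> prod.swap ` A = {}" "(A \<union> prod.swap ` A) \<inter> Id_on V = {}"
      unfolding A_def by auto
    moreover have "(\<Sum>(u, v) \<in> Id_on V. f u v) = 0"
      by (rule sum.neutral) (auto simp: diag)
    ultimately show ?thesis using fin by (simp add: sum.union_disjoint)
  qed
  also have "(\<Sum>(u, v) \<in> prod.swap ` A. f u v) = (\<Sum>(u, v) \<in> A. f u v)"
    by (subst sum.reindex) (auto simp: sym intro!: sum.cong)
  finally show ?thesis unfolding A_def by (simp add: mult_2)
qed

definition nat_dist :: "nat \<Rightarrow> nat \<Rightarrow> nat" where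
  "nat_dist i j = (if i \<le> j then j - i else i - j)"

lemma nat_dist_simps [simp]: "nat_dist i 0 = i" "nat_dist 0 j = j" "nat_dist i i = 0"
  unfolding nat_dist_def by simp_all

lemma nat_dist_commute: "nat_dist i j = nat_dist j i"
  unfolding nat_dist_def by auto

lemma nat_dist_triangle: "nat_dist i k \<le> nat_dist i j + nat_dist j k"
  unfolding nat_dist_def by auto

definition db_pos :: "nat \<Rightarrow> nat \<Rightarrow> nat \<Rightarrow> nat \<Rightarrow> nat" where
  "db_pos n a b v = (if v < n - a - b then v else if v < n - b then 0 else n - a - b - 1)"

definition db_depth :: "nat \<Rightarrow> nat \<Rightarrow> nat \<Rightarrow> nat \<Rightarrow> nat" where
  "db_depth n a b v = (if v < n - a - b then 0 else 1)"

definition db_dist :: "nat \<Rightarrow> nat \<Rightarrow> nat \<Rightarrow> nat \<Rightarrow> nat \<Rightarrow> nat" where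
  "db_dist n a b u v = (if u = v then 0
     else nat_dist (db_pos n a b u) (db_pos n a b v) + db_depth n a b u + db_depth n a b v)"

lemma db_spine:
  assumes "v < n - a - b"
  shows "db_pos n a b v = v" "db_depth n a b v = 0"
  using assms unfolding db_pos_def db_depth_def by auto

lemma db_leaf:
  assumes "n - a - b \<le> v"
  shows "db_depth n a b v = 1"
    and "v < n - b \<Longrightarrow> db_pos n a b v = 0"
    and "n - b \<le> v \<Longrightarrow> db_pos n a b v = n - a - b - 1"
  using assms unfolding db_pos_def db_depth_def by auto

lemma db_pos_less: "a + b < n \<Longrightarrow> db_pos n a b v < n - a - b"
  unfolding db_pos_def by auto

lemma db_dist_commute: "db_dist n a b u v = db_dist n a b v u"
  unfolding db_dist_def using nat_dist_commute by auto

lemma db_dist_triangle: "db_dist n a b u w \<le> db_dist n a b u v + db_dist n a b v w"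
  unfolding db_dist_def
  using nat_dist_triangle[of "db_pos n a b u" "db_pos n a b v" "db_pos n a b w"] nat_dist_commute
  by (auto simp: nat_dist_def)

lemma db_dist_edge:
  assumes "a + b < n" "db_edge n a b u v"
  shows "db_dist n a b u v = 1"
proof -
  have "db_dist n a b u v = 1" if "db_arc n a b u v" for u v
    using that assms(1) unfolding db_arc_def Let_def
    by (auto simp: db_dist_def nat_dist_def db_spine db_leaf)
  then show ?thesis using assms(2) db_dist_commute unfolding db_edge_def by metis
qed

lemma db_edge_hub:
  assumes "n - a - b \<le> v" "v < n"
  shows "db_edge n a b (db_pos n a b v) v"
  using assms unfolding db_edge_def db_arc_def db_pos_def Let_def by auto

lemma db_edge_spine: "Suc u < n - a - b \<Longrightarrow> db_edge n a b u (Suc u)"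
  unfolding db_edge_def db_arc_def by simp

lemma db_dist_via_spine:
  assumes "w < n - a - b" "u \<noteq> v"
    and "nat_dist w (db_pos n a b v) + 1 = nat_dist (db_pos n a b u) (db_pos n a b v) + db_depth n a b u"
  shows "db_dist n a b w v + 1 = db_dist n a b u v"
  using assms by (auto simp: db_dist_def db_spine nat_dist_def)

lemma db_dist_step:
  assumes "a + b < n" "u < n" "v < n" "u \<noteq> v"
  shows "\<exists>w\<in>{0..<n}. db_edge n a b u w \<and> db_dist n a b w v + 1 = db_dist n a b u v"
proof -
  let ?L = "n - a - b" and ?p = "db_pos n a b"
  have edge_commute: "db_edge n a b x y \<longleftrightarrow> db_edge n a b y x" for x y
    unfolding db_edge_def by blast
  have "?p v < ?L" using db_pos_less assms(1) .
  \<comment> \<open>A leaf steps to its broom vertex; a path vertex steps along the path towards \<open>?p v\<close>,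
    or onto \<open>v\<close> itself when \<open>v\<close> is a leaf hanging on it.\<close>
  consider "?L \<le> u" | "u < ?L" "u < ?p v" | "u < ?L" "?p v < u" | "u < ?L" "?p v = u"
    by linarith
  then show ?thesis
  proof cases
    case 1
    then show ?thesis
      using db_edge_hub[of n a b u] db_pos_less[of a b n u] db_leaf(1)[OF 1] assms edge_commute
      by (intro bexI[of _ "?p u"] conjI db_dist_via_spine) (auto simp: nat_dist_def)
  next
    case 2
    then show ?thesis
      using db_edge_spine[of u n a b] \<open>?p v < ?L\<close> assms
      by (intro bexI[of _ "Suc u"] conjI db_dist_via_spine) (auto simp: nat_dist_def db_spine)
  next
    case 3
    then show ?thesis
      using db_edge_spine[of "u - 1" n a b] assms edge_commute
      by (intro bexI[of _ "u - 1"] conjI db_dist_via_spine) (auto simp: nat_dist_def db_spine)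
  next
    case 4
    then have "?L \<le> v" using assms(4) db_spine(1)[of v n a b] by fastforce
    then show ?thesis
      using 4 db_edge_hub[of n a b v] assms
      by (intro bexI[of _ v]) (auto simp: db_dist_def db_spine db_leaf(1))
  qed
qed

lemma gdist_double_broom:
  assumes "a + b < n" "u < n" "v < n"
  shows "gdist {0..<n} (db_edge n a b) u v = db_dist n a b u v"
proof (rule gdist_eqI)
  show "db_dist n a b u y \<le> db_dist n a b u x + 1" if "db_edge n a b x y" for u x y
    using db_dist_triangle[of n a b u y x] db_dist_edge[OF assms(1) that] by simp
qed (use db_dist_step[OF assms(1)] assms in \<open>auto simp: db_dist_def\<close>)

lemma sum_db_pos:
  fixes h :: "nat \<Rightarrow> 'c::comm_semiring_1"
  assumes "a + b < n"
  shows "(\<Sum>u\<in>{0..<n}. h (db_pos n a b u))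
           = (\<Sum>i<n - a - b. h i) + of_nat a * h 0 + of_nat b * h (n - a - b - 1)"
proof -
  let ?L = "n - a - b"
  have "(\<Sum>u\<in>{0..<n}. h (db_pos n a b u)) = (\<Sum>u\<in>{0..<?L}. h (db_pos n a b u))
      + (\<Sum>u\<in>{?L..<n - b}. h (db_pos n a b u)) + (\<Sum>u\<in>{n - b..<n}. h (db_pos n a b u))"
    using assms by (simp add: sum.atLeastLessThan_concat)
  also have "\<dots> = (\<Sum>i\<in>{0..<?L}. h i) + (\<Sum>u\<in>{?L..<n - b}. h 0) + (\<Sum>u\<in>{n - b..<n}. h (?L - 1))"
    by (intro arg_cong2[where f = "(+)"] sum.cong) (auto simp: db_spine db_leaf)
  finally show ?thesis using assms by (simp add: atLeast0LessThan)
qed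

lemma sum_db_depth:
  assumes "a + b < n"
  shows "(\<Sum>u\<in>{0..<n}. db_depth n a b u) = a + b"
proof -
  have "(\<Sum>u\<in>{0..<n}. db_depth n a b u)
      = (\<Sum>u\<in>{0..<n - a - b}. db_depth n a b u) + (\<Sum>u\<in>{n - a - b..<n}. db_depth n a b u)"
    by (simp add: sum.atLeastLessThan_concat)
  also have "\<dots> = (\<Sum>u\<in>{n - a - b..<n}. 1)"
    by (simp add: db_spine db_leaf)
  finally show ?thesis using assms by simp
qed

lemma sum_nat_dist_to_end: "(\<Sum>i<L. nat_dist i (L - 1)) = (\<Sum>i<L. i)"
proof -
  have "(\<Sum>i<L. nat_dist i (L - 1)) = (\<Sum>i<L. L - Suc i)"
    by (intro sum.cong) (auto simp: nat_dist_def)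
  then show ?thesis using sum.nat_diff_reindex[of "\<lambda>i. i" L] by simp
qed

lemma sum_nat_dist_db_pos:
  assumes "a + b < n"
  shows "(\<Sum>u\<in>{0..<n}. \<Sum>v\<in>{0..<n}. nat_dist (db_pos n a b u) (db_pos n a b v))
    = (\<Sum>i<n - a - b. \<Sum>j<n - a - b. nat_dist i j) + 2 * (a + b) * (\<Sum>i<n - a - b. i)
      + 2 * a * b * (n - a - b - 1)"
proof -
  define L where "L = n - a - b"
  define K where "K = L - 1"
  let ?T = "\<Sum>i<L. i"
  have to_end: "(\<Sum>i<L. nat_dist i K) = ?T" "(\<Sum>j<L. nat_dist K j) = ?T"
    using sum_nat_dist_to_end[of L] by (simp_all add: K_def nat_dist_commute)
  define h where "h i = (\<Sum>j<L. nat_dist i j) + a * nat_dist i 0 + b * nat_dist i K" for i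
  have pos_sum: "(\<Sum>u\<in>{0..<n}. g (db_pos n a b u)) = (\<Sum>i<L. g i) + a * g 0 + b * g K"
    for g :: "nat \<Rightarrow> nat"
    unfolding L_def K_def by (simp only: sum_db_pos[OF assms] of_nat_id)
  have "(\<Sum>u\<in>{0..<n}. \<Sum>v\<in>{0..<n}. nat_dist (db_pos n a b u) (db_pos n a b v))
      = (\<Sum>u\<in>{0..<n}. h (db_pos n a b u))"
    unfolding h_def by (rule sum.cong[OF refl]) (rule pos_sum)
  also have "\<dots> = (\<Sum>i<L. h i) + a * h 0 + b * h K"
    by (rule pos_sum)
  also have "\<dots> = (\<Sum>i<L. \<Sum>j<L. nat_dist i j) + 2 * (a + b) * ?T + 2 * a * b * K"
    unfolding h_def
    by (simp add: sum.distrib to_end flip: sum_distrib_left) (simp add: nat_dist_commute algebra_simps)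
  finally show ?thesis unfolding K_def L_def .
qed

lemma double_broom_wiener_formula:
  assumes "a + b < n"
  shows "2 * double_broom_wiener n a b
    = (\<Sum>i<n - a - b. \<Sum>j<n - a - b. nat_dist i j) + 2 * (a + b) * (\<Sum>i<n - a - b. i)
      + 2 * a * b * (n - a - b - 1) + 2 * (n - 1) * (a + b)"
proof -
  let ?V = "{0..<n}" and ?d = "db_dist n a b" and ?e = "db_depth n a b"
  let ?nd = "\<lambda>u v. nat_dist (db_pos n a b u) (db_pos n a b v)"
  have diagonal: "?d u v + (if u = v then 2 * ?e u else 0) = ?nd u v + ?e u + ?e v" for u v
    by (simp add: db_dist_def)
  have "double_broom_wiener n a b = (\<Sum>(u, v) \<in> {(u, v). u \<in> ?V \<and> v \<in> ?V \<and> u < v}. ?d u v)"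
    unfolding double_broom_wiener_def wiener_def
    by (rule sum.cong) (auto simp: gdist_double_broom[OF assms])
  then have double: "2 * double_broom_wiener n a b = (\<Sum>u\<in>?V. \<Sum>v\<in>?V. ?d u v)"
    using sum_pairs_less_double[of ?V ?d] db_dist_commute by (simp add: db_dist_def)
  have "(\<Sum>u\<in>?V. \<Sum>v\<in>?V. ?d u v) + 2 * (\<Sum>u\<in>?V. ?e u)
      = (\<Sum>u\<in>?V. \<Sum>v\<in>?V. ?d u v + (if u = v then 2 * ?e u else 0))"
    by (simp only: sum.distrib sum_distrib_left sum.delta finite_atLeastLessThan) simp
  also have "\<dots> = (\<Sum>u\<in>?V. \<Sum>v\<in>?V. ?nd u v + ?e u + ?e v)"
    by (simp only: diagonal)
  also have "\<dots> = (\<Sum>u\<in>?V. \<Sum>v\<in>?V. ?nd u v) + 2 * n * (\<Sum>u\<in>?V. ?e u)"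
    by (simp add: sum.distrib sum_distrib_left[symmetric] sum.swap[of "\<lambda>u v. ?e v"] algebra_simps)
  finally have "(\<Sum>u\<in>?V. \<Sum>v\<in>?V. ?d u v) + 2 * (a + b)
      = (\<Sum>u\<in>?V. \<Sum>v\<in>?V. ?nd u v) + 2 * n * (a + b)"
    unfolding sum_db_depth[OF assms] .
  moreover have "2 * n * (a + b) = 2 * (n - 1) * (a + b) + 2 * (a + b)"
    using assms by (cases n) simp_all
  ultimately show ?thesis
    using double sum_nat_dist_db_pos[OF assms] by linarith
qed

lemma double_broom_wiener_le_if_mult_le:
  assumes "a + b < n" "a' + b' = a + b" "a' * b' \<le> a * b"
  shows "double_broom_wiener n a' b' \<le> double_broom_wiener n a b"
proof -
  have "2 * double_broom_wiener n a' b' \<le> 2 * double_broom_wiener n a b"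
    using double_broom_wiener_formula[of a b n] double_broom_wiener_formula[of a' b' n] assms
    by simp
  then show ?thesis by simp
qed

lemma mult_le_balanced_split:
  fixes a b :: nat
  shows "a * b \<le> ((a + b) div 2) * ((a + b + 1) div 2)"
proof -
  have "x * y \<le> ((x + y) div 2) * ((x + y + 1) div 2)" if "x \<le> y" for x y :: nat
  proof -
    define k where "k = (x + y) div 2"
    define m where "m = (x + y + 1) div 2"
    have "k + m = x + y" "x \<le> k" "k \<le> m"
      using that unfolding k_def m_def by linarith+
    then obtain t where "k = x + t" "y = m + t"
      using le_Suc_ex by fastforce
    then have "x * y = x * m + x * t" "k * m = x * m + t * m"
      by (simp_all add: algebra_simps)
    moreover have "x * t \<le> t * m" using \<open>x \<le> k\<close> \<open>k \<le> m\<close> by (simp add: mult.commute)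
    ultimately show ?thesis unfolding k_def m_def by linarith
  qed
  from this[of a b] this[of b a] show ?thesis
    by (cases "a \<le> b") (simp_all add: add.commute mult.commute)
qed

theorem mainTheorem13:
  fixes n a b g :: nat
  assumes "0 < a" and "0 < b" and "a + b + 2 \<le> n" and "g = a + b"
  shows "(even g \<longrightarrow> (\<forall>a' b'. 0 < a' \<longrightarrow> 0 < b' \<longrightarrow> a' + b' = g \<longrightarrow>
            double_broom_wiener n a' b' \<le> double_broom_wiener n (g div 2) (g div 2)))
       \<and> (odd g \<longrightarrow> (\<forall>a' b'. 0 < a' \<longrightarrow> 0 < b' \<longrightarrow> a' + b' = g \<longrightarrow>
            double_broom_wiener n a' b' \<le> double_broom_wiener n ((g - 1) div 2) ((g + 1) div 2)))"
proof -
  have balanced_best: "double_broom_wiener n a' b' \<le> double_broom_wiener n (g div 2) ((g + 1) div 2)"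
    if "a' + b' = g" for a' b'
  proof (rule double_broom_wiener_le_if_mult_le)
    show "g div 2 + (g + 1) div 2 < n" "a' + b' = g div 2 + (g + 1) div 2"
      using that assms(3,4) by linarith+
    show "a' * b' \<le> g div 2 * ((g + 1) div 2)"
      using mult_le_balanced_split[of a' b'] that by simp
  qed
  have "(g + 1) div 2 = g div 2" if "even g" using that by (auto elim: evenE)
  moreover have "(g - 1) div 2 = g div 2" if "odd g" using that by (auto elim: oddE)
  ultimately show ?thesis using balanced_best by auto
qed

end
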